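(* Every non-commutative BCK-algebra $\mathcal A$ of order $n$ satisfies $\operatorname{cd}(\mathcal A)\le\frac{n^2-2}{n^2}$, and for each $n\ge3$ this bound is attained: the algebra $\mathcal B_n$ defined by $\mathcal B_3=\mathcal{PI}$ and $\mathcal B_n=\mathcal B_{n-1}\sqcup\mathbf 2$ for $n>3$ is a non-commutative BCK-algebra of order $n$ with $\operatorname{cd}(\mathcal B_n)=\frac{n^2-2}{n^2}$. Consequently the equation $x\wedge y=y\wedge x$ has no finite satisfiability gap among BCK-algebras.
   Context: A BCK-algebra is a set $A$ with a binary operation $\cdot$ and a constant $0$ such that for all $x,y,z\in A$: (BCK1) $((x\cdot y)\cdot(x\cdot z))\cdot(z\cdot y)=0$; (BCK2) $(x\cdot(x\cdot y))\cdot y=0$; (BCK3) $x\cdot x=0$; (BCK4) $0\cdot x=0$; (BCK5) $x\cdot y=0$ and $y\cdot x=0$ imply $x=y$. Define $x\wedge y:=y\cdot(y\cdot x)$; the algebra is commutative if $x\wedge y=y\wedge x$ for all $x,y$. For finite $\mathcal A$, $\operatorname{cd}(\mathcal A)=|\{(x,y)\in A^2:x\wedge y=y\wedge x\}|/|A|^2$. $\mathcal{PI}$ is the BCK-algebra on $\{0,1,2\}$ with $1\cdot0=1$, $2\cdot0=2$, $2\cdot1=2$ and all other products $0$. $\mathbf 2$ is a two-element BCK-algebra $\{0,b\}$ with $b\cdot0=b$ and other products $0$, where $b$ is a new element. For BCK-algebras $\mathcal A,\mathcal B$ with $A\cap B=\{0\}$, the BCK-union $\mathcal A\sqcup\mathcal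 B$ has carrier $A\cup B$, with $x\cdot y$ computed in $\mathcal A$ if $x,y\in A$, in $\mathcal B$ if $x,y\in B$, and $x\cdot y=x$ otherwise. An equation has no finite satisfiability gap in a class if for every $\epsilon>0$ some finite member has degree of satisfiability strictly between $1-\epsilon$ and $1$. *)

theory Defs
  imports Complex_Main
begin

definition bck :: "'a set \<Rightarrow> ('a \<Rightarrow> 'a \<Rightarrow> 'a) \<Rightarrow> 'a \<Rightarrow> bool" where
  "bck A m z \<longleftrightarrow> z \<in> A \<and> (\<forall>x\<in>A. \<forall>y\<in>A. m x y \<in> A) \<and>
     (\<forall>x\<in>A. \<forall>y\<in>A. \<forall>w\<in>A. m (m (m x y) (m x w)) (m w y) = z) \<and>
     (\<forall>x\<in>A. \<forall>y\<in>A. m (m x (m x y)) y = z) \<and>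
     (\<forall>x\<in>A. m x x = z) \<and>
     (\<forall>x\<in>A. m z x = z) \<and>
     (\<forall>x\<in>A. \<forall>y\<in>A. m x y = z \<and> m y x = z \<longrightarrow> x = y)"

definition meet :: "('a \<Rightarrow> 'a \<Rightarrow> 'a) \<Rightarrow> 'a \<Rightarrow> 'a \<Rightarrow> 'a" where
  "meet m x y = m y (m y x)"

definition commutative :: "'a set \<Rightarrow> ('a \<Rightarrow> 'a \<Rightarrow> 'a) \<Rightarrow> bool" where
  "commutative A m \<longleftrightarrow> (\<forall>x\<in>A. \<forall>y\<in>A. meet m x y = meet m y x)"

definition cd :: "'a set \<Rightarrow> ('a \<Rightarrow> 'a \<Rightarrow> 'a) \<Rightarrow> real" where
  "cd A m = real (card {(x, y) \<in> A \<times> A. meet m x y = meet m y x}) / real (card A) ^ 2"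

text \<open>BCK-union of (A, mA) and (B, mB), assuming A \<inter> B = {0}.\<close>
definition bck_union :: "'a set \<Rightarrow> ('a \<Rightarrow> 'a \<Rightarrow> 'a) \<Rightarrow> 'a set \<Rightarrow> ('a \<Rightarrow> 'a \<Rightarrow> 'a) \<Rightarrow> 'a \<Rightarrow> 'a \<Rightarrow> 'a" where
  "bck_union A mA B mB x y =
     (if x \<in> A \<and> y \<in> A then mA x y else if x \<in> B \<and> y \<in> B then mB x y else x)"

text \<open>The algebra PI on {0,1,2}.\<close>
definition PI_op :: "nat \<Rightarrow> nat \<Rightarrow> nat" where
  "PI_op x y = (if x = 1 \<and> y = 0 then 1 else if x = 2 \<and> (y = 0 \<or> y = 1) then 2 else 0)"

text \<open>The two-element algebra {0,b}.\<close>
definition two_op :: "nat \<Rightarrow> nat \<Rightarrow> nat \<Rightarrow> nat" where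
  "two_op b x y = (if x = b \<and> y = 0 then b else 0)"

text \<open>B_op k is the operation of B_(k+3), carrier {..<k+3}; the new element of 2 is k+3.\<close>
primrec B_op :: "nat \<Rightarrow> nat \<Rightarrow> nat \<Rightarrow> nat" where
  "B_op 0 = PI_op"
| "B_op (Suc k) = bck_union {..<k+3} (B_op k) {0, k+3} (two_op (k+3))"

definition Bn :: "nat \<Rightarrow> nat \<Rightarrow> nat \<Rightarrow> nat" where
  "Bn n = B_op (n - 3)"

end

theory Submission
  imports Defs
begin

text \<open>If \<open>meet m x y \<noteq> meet m y x\<close>, then \<open>x \<noteq> y\<close> and both pairs \<open>(x, y)\<close> and \<open>(y, x)\<close>
  fail to commute, which gives the bound. The algebra \<open>\<B>\<^sub>n\<close> has the closed form
  \<open>x \<sqdot> y = 0\<close> if \<open>x = y\<close>, \<open>x = 0\<close> or \<open>(x, y) = (1, 2)\<close>, and \<open>x \<sqdot> y = x\<close> otherwise; so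
  \<open>meet 1 2 = 1 \<noteq> 0 = meet 2 1\<close> while all other pairs commute, and the bound is attained.
  Since \<open>2 / n\<^sup>2 \<rightarrow> 0\<close>, there is no finite satisfiability gap.\<close>

lemma card_square_Diff_swap:
  assumes "finite A" "x \<in> A" "y \<in> A" "x \<noteq> y"
  shows "real (card (A \<times> A - {(x, y), (y, x)})) = real (card A) ^ 2 - 2"
proof -
  have "card {x, y} \<le> card A"
    using assms by (intro card_mono) auto
  then have "2 \<le> card A"
    using assms(4) by simp
  then have "2 \<le> card A * card A"
    using le_square order.trans by blast
  then show ?thesis
    using assms by (simp add: card_Diff_subset card_cartesian_product of_nat_diff power2_eq_square)
qed

lemma cd_le_of_not_commutative:
  assumes "finite A" "\<not> commutative A m"
  shows "cd A m \<le> (real (card A) ^ 2 - 2) / real (card A) ^ 2"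
proof -
  obtain x y where xy: "x \<in> A" "y \<in> A" "meet m x y \<noteq> meet m y x"
    using assms(2) unfolding commutative_def by auto
  then have "x \<noteq> y" by auto
  have "{(x, y) \<in> A \<times> A. meet m x y = meet m y x} \<subseteq> A \<times> A - {(x, y), (y, x)}"
    using xy by auto
  then have "card {(x, y) \<in> A \<times> A. meet m x y = meet m y x} \<le> card (A \<times> A - {(x, y), (y, x)})"
    using assms(1) by (intro card_mono) auto
  then have "real (card {(x, y) \<in> A \<times> A. meet m x y = meet m y x}) \<le> real (card A) ^ 2 - 2"
    using card_square_Diff_swap[OF assms(1) xy(1,2) \<open>x \<noteq> y\<close>] by linarith
  then show ?thesis
    unfolding cd_def by (simp add: divide_right_mono)
qed

lemma bck_cong:
  assumes "\<And>x y. x \<in> A \<Longrightarrow> y \<in> A \<Longrightarrow> m x y = m' x y"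
  shows "bck A m z \<longleftrightarrow> bck A m' z"
proof
  assume h: "bck A m z"
  then have "\<forall>x\<in>A. \<forall>y\<in>A. m x y \<in> A"
    by (simp add: bck_def)
  with h show "bck A m' z"
    unfolding bck_def by (simp add: assms[symmetric])
next
  assume h: "bck A m' z"
  then have "\<forall>x\<in>A. \<forall>y\<in>A. m' x y \<in> A"
    by (simp add: bck_def)
  with h show "bck A m z"
    unfolding bck_def by (simp add: assms)
qed

lemma meet_cong:
  assumes "\<And>x y. x \<in> A \<Longrightarrow> y \<in> A \<Longrightarrow> m x y = m' x y" "\<forall>x\<in>A. \<forall>y\<in>A. m x y \<in> A"
    "x \<in> A" "y \<in> A"
  shows "meet m x y = meet m' x y"
  using assms unfolding meet_def by simp

definition bn_op :: "nat \<Rightarrow> nat \<Rightarrow> nat" where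
  "bn_op x y = (if x = y \<or> x = 0 \<or> (x = 1 \<and> y = 2) then 0 else x)"

lemma B_op_eq_bn_op: "x < k + 3 \<Longrightarrow> y < k + 3 \<Longrightarrow> B_op k x y = bn_op x y"
proof (induction k arbitrary: x y)
  case 0
  then show ?case by (auto simp: PI_op_def bn_op_def)
next
  case (Suc k)
  then show ?case
    by (cases "x < k + 3 \<and> y < k + 3") (auto simp: bck_union_def two_op_def bn_op_def)
qed

lemma Bn_eq_bn_op: "3 \<le> n \<Longrightarrow> x < n \<Longrightarrow> y < n \<Longrightarrow> Bn n x y = bn_op x y"
  unfolding Bn_def using B_op_eq_bn_op[of x "n - 3" y] by simp

lemma bn_op_in: "x \<in> A \<Longrightarrow> 0 \<in> A \<Longrightarrow> bn_op x y \<in> A"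
  by (simp add: bn_op_def)

lemma bck_bn_op:
  assumes "0 \<in> A"
  shows "bck A bn_op 0"
proof -
  have "bn_op (bn_op (bn_op x y) (bn_op x w)) (bn_op w y) = 0" for x y w
  proof (cases "bn_op x y = 0")
    case False
    then have xy: "bn_op x y = x" "x \<noteq> y" "x \<noteq> 0" "\<not> (x = 1 \<and> y = 2)"
      by (auto simp: bn_op_def split: if_splits)
    show ?thesis
    proof (cases "bn_op x w = 0")
      case True
      then have "x = w \<or> (x = 1 \<and> w = 2)"
        using xy by (auto simp: bn_op_def split: if_splits)
      then have "bn_op w y = w"
        using xy by (auto simp: bn_op_def)
      then show ?thesis
        using xy True by (simp add: bn_op_def)
    next
      case False
      then have "bn_op x w = x"
        by (auto simp: bn_op_def split: if_splits)
      then show ?thesis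
        using xy by (simp add: bn_op_def)
    qed
  qed (simp add: bn_op_def)
  moreover have "bn_op x y = 0 \<Longrightarrow> bn_op y x = 0 \<Longrightarrow> x = y" for x y
    by (auto simp: bn_op_def split: if_splits)
  moreover have "bn_op (bn_op x (bn_op x y)) y = 0" "bn_op x x = 0" "bn_op 0 x = 0" for x y
    by (simp_all add: bn_op_def)
  ultimately show ?thesis
    using assms unfolding bck_def by (blast intro: bn_op_in)
qed

lemma meet_bn_op: "meet bn_op x y = (if y = x \<or> (y = 1 \<and> x = 2) then y else 0)"
  unfolding meet_def bn_op_def by auto

lemma meet_Bn:
  assumes "3 \<le> n" "x < n" "y < n"
  shows "meet (Bn n) x y = meet bn_op x y"
  using assms by (intro meet_cong[where A = "{..<n}"]) (auto simp: Bn_eq_bn_op bn_op_def)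

lemma commuting_pairs_Bn:
  assumes "3 \<le> n"
  shows "{(x, y) \<in> {..<n} \<times> {..<n}. meet (Bn n) x y = meet (Bn n) y x}
           = {..<n} \<times> {..<n} - {(1, 2), (2, 1)}"
  using assms by (auto simp: meet_Bn meet_bn_op)

lemma Bn_properties:
  assumes "3 \<le> n"
  shows "bck {..<n} (Bn n) 0 \<and> \<not> commutative {..<n} (Bn n) \<and> card {..<n} = n \<and>
           cd {..<n} (Bn n) = (real n ^ 2 - 2) / real n ^ 2"
proof (intro conjI)
  have "bck {..<n} bn_op 0"
    using assms by (intro bck_bn_op) simp
  then show "bck {..<n} (Bn n) 0"
    using assms by (subst bck_cong[where m' = bn_op]) (simp_all add: Bn_eq_bn_op)
  have "meet (Bn n) 1 2 \<noteq> meet (Bn n) 2 1"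
    using assms by (simp add: meet_Bn meet_bn_op)
  then show "\<not> commutative {..<n} (Bn n)"
    using assms unfolding commutative_def by force
  have "real (card ({..<n} \<times> {..<n} - {(1, 2), (2, 1)})) = real n ^ 2 - 2"
    using assms by (subst card_square_Diff_swap) simp_all
  then show "cd {..<n} (Bn n) = (real n ^ 2 - 2) / real n ^ 2"
    unfolding cd_def commuting_pairs_Bn[OF assms] by simp
qed simp

lemma cd_Bn_arbitrarily_close_to_one:
  assumes "\<epsilon> > 0"
  obtains n where "3 \<le> n" "1 - \<epsilon> < cd {..<n} (Bn n)" "cd {..<n} (Bn n) < 1"
proof -
  obtain k :: nat where "2 / \<epsilon> < real k"
    using reals_Archimedean2 by blast
  define n where "n = k + 3"
  then have "2 / \<epsilon> < real n"
    using \<open>2 / \<epsilon> < real k\<close> by simp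
  then have "2 < \<epsilon> * real n"
    using assms by (simp add: pos_divide_less_eq mult.commute)
  also have "\<dots> \<le> \<epsilon> * real n ^ 2"
    using assms le_square[of n] by (intro mult_left_mono) (simp_all flip: of_nat_mult add: power2_eq_square)
  finally have "2 / real n ^ 2 < \<epsilon>"
    by (simp add: n_def divide_less_eq mult.commute)
  moreover have "cd {..<n} (Bn n) = 1 - 2 / real n ^ 2"
    using Bn_properties[of n] by (simp add: n_def diff_divide_distrib)
  ultimately show ?thesis
    using that[of n] by (simp add: n_def)
qed

theorem theorem5p3:
  shows "(\<forall>(A::'a set) m z. bck A m z \<and> finite A \<and> \<not> commutative A m \<longrightarrow>
            cd A m \<le> (real (card A) ^ 2 - 2) / real (card A) ^ 2)
       \<and> (\<forall>n::nat. n \<ge> 3 \<longrightarrow>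
            bck {..<n} (Bn n) 0 \<and> \<not> commutative {..<n} (Bn n) \<and> card {..<n} = n \<and>
            cd {..<n} (Bn n) = (real n ^ 2 - 2) / real n ^ 2)
       \<and> (\<forall>\<epsilon>::real. \<epsilon> > 0 \<longrightarrow>
            (\<exists>(A::nat set) m z. bck A m z \<and> finite A \<and> 1 - \<epsilon> < cd A m \<and> cd A m < 1))"
proof -
  have "\<exists>(A::nat set) m z. bck A m z \<and> finite A \<and> 1 - \<epsilon> < cd A m \<and> cd A m < 1"
    if pos: "\<epsilon> > 0" for \<epsilon> :: real
  proof -
    obtain n where "3 \<le> n" "1 - \<epsilon> < cd {..<n} (Bn n)" "cd {..<n} (Bn n) < 1"
      using pos by (rule cd_Bn_arbitrarily_close_to_one)
    then show ?thesis
      using Bn_properties by blast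
  qed
  then show ?thesis
    using cd_le_of_not_commutative Bn_properties by blast
qed

end
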